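(* Assume $\Delta=0$. Let $\lambda_1,\lambda_2,\lambda_3\in K$ with $\lambda_ic_i\in N$ and $s_i':=s_i\nu_i$ where $\nu_i\in N$ corresponds to $\lambda_ic_i$. (1) If $p=2p_1$ is even, then $(s_1's_2')^{p_1}=(s_1s_2)^{p_1}\nu$ with $\nu=\frac{2}{4-\alpha}\big((2\lambda_1+\lambda_2)c_1+(\alpha\lambda_1+2\lambda_2)c_2\big)=\Big(-2\lambda_2,\ \frac{2(2\beta+\alpha l)}{4-\alpha}\lambda_1+\frac{2(\beta+2l)}{4-\alpha}\lambda_2\Big)$. (2) If $q=2q_1$ is even, then $(s_1's_3')^{q_1}=(s_1s_3)^{q_1}\nu'$ with $\nu'=\frac{2}{4-\beta}\big((2\lambda_1+\lambda_3)c_1+(\beta\lambda_1+2\lambda_3)c_3\big)=\Big(\frac{2(2\alpha+\beta m)}{4-\beta}\lambda_1+\frac{2(\alpha+2m)}{4-\beta}\lambda_3,\ -2\lambda_3\Big)$. (3) If $r=2r_1$ is even, then $(s_2's_3')^{r_1}=(s_2s_3)^{r_1}\nu''$ with $\nu''=\frac{2}{4-\gamma}\big((2\lambda_2+m\lambda_3)c_2+(l\lambda_2+2\lambda_3)c_3\big)=(-2\lambda_2,-2\lambda_3)$.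
   Context: Setting. Let $p,q,r\ge 3$ be integers and $W=W(p,q,r)$ the Coxeter group with generators $s_1,s_2,s_3$ and relations $s_i^2=1$, $(s_1s_2)^p=(s_1s_3)^q=(s_2s_3)^r=1$. Let $\alpha=4\cos^2(\pi k_1/p)$, $\beta=4\cos^2(\pi k_2/q)$, $\gamma=4\cos^2(\pi k_3/r)$ with $\gcd(k_1,p)=\gcd(k_2,q)=\gcd(k_3,r)=1$ (so $0<\alpha,\beta,\gamma<4$), and let $l,m\in\mathbb{C}$ with $lm=\gamma$. Let $K\subset\mathbb{C}$ be a field containing $\alpha,\beta,\gamma,l,m$, and $M$ a $3$-dimensional $K$-vector space with basis $(a_1,a_2,a_3)$. The reflection representation $R:W\to GL(M)$ with parameters $(\alpha,\beta,\gamma;l,m)$ is defined by: for $x=\lambda_1a_1+\lambda_2a_2+\lambda_3a_3$, $R(s_1)x=x-(2\lambda_1-\alpha\lambda_2-\beta\lambda_3)a_1$, $R(s_2)x=x-(-\lambda_1+2\lambda_2-l\lambda_3)a_2$, $R(s_3)x=x-(-\lambda_1-m\lambda_2+2\lambda_3)a_3$. Put $G=R(W)$ and write $s_i$ for $R(s_i)$. Let $\Delta=8-2\alpha-2\beta-2\gamma-(\alpha l+\beta m)$; $R$ is reducible iff $\Delta=0$. Reducible setting. Assume $\Delta=0$. Put $b=(4-\gamma)a_1+(l+2)a_2+(m+2)a_3$; then the space of $G$-fixed vectors is $C_M(G)=Kb$ and $(b,a_2,a_3)$ is a basis of $M$. Let $N=N(G)$ be the subgroup of elements of $G$ acting trivially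 on $M/C_M(G)$. Each $\zeta\in N$ satisfies $\zeta(b)=b$, $\zeta(a_2)=a_2+\lambda b$, $\zeta(a_3)=a_3+\mu b$ for a unique $(\lambda,\mu)\in K^2$; the map $\zeta\mapsto(\lambda,\mu)$ is an injective group homomorphism $N\to (K^2,+)$, through which $N$ is identified with an additive subgroup of $K^2$ (and written additively). Put $c_1=(\alpha,\beta)$, $c_2=(-2,l)$, $c_3=(m,-2)\in K^2$. *)

theory Defs
  imports "HOL-Analysis.Analysis"
begin

text \<open>Coordinates with respect to the basis (a1,a2,a3) of M; M = K^3 is embedded in complex^3,
  linear maps are 3x3 complex matrices (entries lie in K).\<close>

definition is_subfield_of_complex :: "complex set \<Rightarrow> bool" where
  "is_subfield_of_complex K \<longleftrightarrow> 0 \<in> K \<and> 1 \<in> K \<and>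
     (\<forall>x\<in>K. \<forall>y\<in>K. x + y \<in> K \<and> x - y \<in> K \<and> x * y \<in> K) \<and>
     (\<forall>x\<in>K. x \<noteq> 0 \<longrightarrow> inverse x \<in> K)"

definition a1 :: "complex^3" where "a1 = axis 1 1"
definition a2 :: "complex^3" where "a2 = axis 2 1"
definition a3 :: "complex^3" where "a3 = axis 3 1"

definition refl1 :: "complex \<Rightarrow> complex \<Rightarrow> complex^3^3" where
  "refl1 \<alpha> \<beta> = matrix (\<lambda>x. x - (2 * x$1 - \<alpha> * x$2 - \<beta> * x$3) *s a1)"
definition refl2 :: "complex \<Rightarrow> complex^3^3" where
  "refl2 l = matrix (\<lambda>x. x - (- x$1 + 2 * x$2 - l * x$3) *s a2)"
definition refl3 :: "complex \<Rightarrow> complex^3^3" where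
  "refl3 m = matrix (\<lambda>x. x - (- x$1 - m * x$2 + 2 * x$3) *s a3)"

text \<open>Subgroup of GL(M) generated by a set S of involutions (closure under left multiplication
  by generators, starting from the identity; since generators are involutions this is the
  generated group).\<close>
inductive_set gen_group :: "(complex^3^3) set \<Rightarrow> (complex^3^3) set" for S where
  gen_one: "mat 1 \<in> gen_group S"
| gen_mult: "g \<in> gen_group S \<Longrightarrow> s \<in> S \<Longrightarrow> s ** g \<in> gen_group S"

fun mpow :: "complex^3^3 \<Rightarrow> nat \<Rightarrow> complex^3^3" where
  "mpow A 0 = mat 1"
| "mpow A (Suc n) = A ** mpow A n"

definition Delta :: "complex \<Rightarrow> complex \<Rightarrow> complex \<Rightarrow> complex \<Rightarrow> complex \<Rightarrow> complex" where
  "Delta \<alpha> \<beta> \<gamma> l m = 8 - 2*\<alpha> - 2*\<beta> - 2*\<gamma> - (\<alpha> * l + \<beta> * m)"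

definition bvec :: "complex \<Rightarrow> complex \<Rightarrow> complex \<Rightarrow> complex^3" where
  "bvec \<gamma> l m = (4 - \<gamma>) *s a1 + (l + 2) *s a2 + (m + 2) *s a3"

definition corresponds :: "complex^3 \<Rightarrow> complex^3^3 \<Rightarrow> complex \<times> complex \<Rightarrow> bool" where
  "corresponds b Z v \<longleftrightarrow> Z *v b = b \<and> Z *v a2 = a2 + fst v *s b \<and> Z *v a3 = a3 + snd v *s b"

definition psc :: "complex \<Rightarrow> complex \<times> complex \<Rightarrow> complex \<times> complex" where
  "psc c v = (c * fst v, c * snd v)"
definition padd :: "complex \<times> complex \<Rightarrow> complex \<times> complex \<Rightarrow> complex \<times> complex" where
  "padd v w = (fst v + fst w, snd v + snd w)"

end

theory Submission
  imports Defs
begin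

text \<open>
  Each reflection is \<open>s\<^sub>i x = x - \<langle>f\<^sub>i, x\<rangle> a\<^sub>i\<close> for a coroot \<open>f\<^sub>i\<close>, and \<open>\<Delta> = 0\<close> (together
  with \<open>l m = \<gamma>\<close>) says exactly that every \<open>f\<^sub>i\<close> vanishes on \<open>b\<close>. Then \<open>\<nu>\<^sub>i\<close> is the
  transvection \<open>x \<mapsto> x - \<lambda>\<^sub>i \<langle>f\<^sub>i, x\<rangle> b\<close>, and \<open>s\<^sub>i \<nu>\<^sub>i s\<^sub>j \<nu>\<^sub>j x = T x + F x \<cdot> b\<close> with
  \<open>T = s\<^sub>i s\<^sub>j\<close> and \<open>F\<close> a linear form in the span of \<open>f\<^sub>i, f\<^sub>j\<close>. As \<open>T\<close> fixes \<open>b\<close>, the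
  \<open>n\<close>-th power sends \<open>x\<close> to \<open>T\<^sup>n x + (\<Sum>j<n. F (T\<^sup>j x)) \<cdot> b\<close>. On the span of \<open>f\<^sub>i, f\<^sub>j\<close> the
  dual action of \<open>T\<close> has determinant 1 and trace \<open>\<kappa> - 2 = 2 cos (2\<pi>k/p)\<close>, so by the
  Chebyshev recurrence \<open>T\<^sup>p\<^sup>/\<^sup>2\<close> acts there as \<open>-1\<close> (\<open>k\<close> is odd). Writing
  \<open>F = G - G \<circ> T\<close> (possible since \<open>4 - \<kappa> \<noteq> 0\<close>), the sum telescopes to
  \<open>G - G \<circ> T\<^sup>p\<^sup>/\<^sup>2 = 2 G\<close>, which is the form of the transvection \<open>\<nu>\<close> of the statement.
\<close>

definition pairing :: "'a::comm_ring_1^'n \<Rightarrow> 'a^'n \<Rightarrow> 'a" where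
  "pairing w x = (\<Sum>i\<in>UNIV. w$i * x$i)"

lemma pairing_add_right: "pairing w (x + y) = pairing w x + pairing w y"
  by (simp add: pairing_def distrib_left sum.distrib)

lemma pairing_diff_right: "pairing w (x - y) = pairing w x - pairing w y"
  by (simp add: pairing_def right_diff_distrib sum_subtractf)

lemma pairing_scale_right: "pairing w (c *s x) = c * pairing w x"
  by (simp add: pairing_def sum_distrib_left algebra_simps)

lemma pairing_add_left: "pairing (v + w) x = pairing v x + pairing w x"
  by (simp add: pairing_def distrib_right sum.distrib)

lemma pairing_scale_left: "pairing (c *s w) x = c * pairing w x"
  by (simp add: pairing_def sum_distrib_left algebra_simps)

lemma pairing_minus_left: "pairing (- w) x = - pairing w x"
  by (simp add: pairing_def sum_negf)

lemmas pairing_linear = pairing_add_right pairing_diff_right pairing_scale_right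
  pairing_add_left pairing_scale_left pairing_minus_left

lemma pairing_3: "pairing (w :: 'a::comm_ring_1^3) x = w$1 * x$1 + w$2 * x$2 + w$3 * x$3"
  by (simp add: pairing_def sum_3)

lemma pairing_reflection:
  assumes "\<And>x. P *v x = x - pairing w x *s u"
  shows "pairing w' (P *v x) = pairing w' x - pairing w' u * pairing w x"
  by (simp add: assms pairing_linear mult.commute)

lemma pairing_a1 [simp]: "pairing w a1 = w$1"
  and pairing_a2 [simp]: "pairing w a2 = w$2"
  and pairing_a3 [simp]: "pairing w a3 = w$3"
  by (simp_all add: pairing_3 a1_def a2_def a3_def axis_def)

lemma mpow_Suc_mult_vector: "mpow T (Suc k) *v x = T *v (mpow T k *v x)"
  by (simp add: matrix_vector_mul_assoc)

lemma mpow_fixes: "T *v b = b \<Longrightarrow> mpow T k *v b = b"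
  by (induction k) (simp_all add: matrix_vector_mul_assoc[symmetric])

lemma chebyshev_half_period:
  fixes u :: "nat \<Rightarrow> 'a::real_field"
  assumes rec: "\<And>k. u (Suc (Suc k)) = 2 * of_real (cos \<phi>) * u (Suc k) - u k"
    and "sin \<phi> \<noteq> 0" "sin (real n * \<phi>) = 0" "sin ((real n - 1) * \<phi>) = sin \<phi>"
  shows "u n = - u 0"
proof -
  define S :: "real \<Rightarrow> 'a" where "S t = of_real (sin (t * \<phi>))" for t
  have S_rec: "S (t + 1) = 2 * of_real (cos \<phi>) * S t - S (t - 1)" for t
  proof -
    have "sin ((t + 1) * \<phi>) = 2 * cos \<phi> * sin (t * \<phi>) - sin ((t - 1) * \<phi>)"
      by (simp add: distrib_right left_diff_distrib sin_add sin_diff)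
    then show ?thesis by (simp add: S_def)
  qed
  have "S 1 * u k = S (real k) * u 1 - S (real k - 1) * u 0" for k
  proof (induction k rule: induct_nat_012)
    case (ge2 k)
    have IH: "S 1 * u k = S (real k) * u 1 - S (real k - 1) * u 0"
      "S 1 * u (Suc k) = S (real k + 1) * u 1 - S (real k) * u 0"
      using ge2 by (simp_all add: add.commute)
    have "S 1 * u (Suc (Suc k)) = 2 * of_real (cos \<phi>) * (S 1 * u (Suc k)) - S 1 * u k"
      by (simp add: rec algebra_simps)
    also have "\<dots> = (2 * of_real (cos \<phi>) * S (real k + 1) - S (real k)) * u 1
        - (2 * of_real (cos \<phi>) * S (real k) - S (real k - 1)) * u 0"
      by (simp only: IH) (simp add: algebra_simps)
    also have "\<dots> = S (real k + 2) * u 1 - S (real k + 1) * u 0"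
      using S_rec[of "real k + 1"] S_rec[of "real k"] by (simp add: add.assoc)
    finally show ?case by (simp add: add.commute)
  qed (simp_all add: S_def)
  from this[of n] have "S 1 * u n = S 1 * (- u 0)"
    using assms(3,4) by (simp add: S_def)
  moreover have "S 1 \<noteq> 0"
    using assms(2) by (simp add: S_def)
  ultimately show ?thesis
    by (metis mult_left_cancel)
qed

lemma sin_pi_fraction_neq_zero:
  fixes k p :: nat
  assumes "p \<ge> 2" "coprime k p"
  shows "sin (pi * real k / real p) \<noteq> 0"
proof
  assume "sin (pi * real k / real p) = 0"
  then obtain i :: int where "pi * real k / real p = of_int i * pi"
    using sin_zero_iff_int2 by blast
  then have "real k = of_int i * real p"
    using assms(1) by (simp add: field_simps)
  then have "int k = i * int p"
    by (metis of_int_eq_iff of_int_mult of_int_of_nat_eq)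
  then have "int p dvd int k"
    by simp
  then have "p dvd gcd k p"
    by simp
  with assms show False
    by simp
qed

lemma four_minus_four_cos_squared_neq_zero:
  fixes k p :: nat
  assumes "p \<ge> 2" "coprime k p"
  shows "4 - complex_of_real (4 * (cos (pi * real k / real p))^2) \<noteq> 0"
proof -
  have "4 - 4 * (cos (pi * real k / real p))^2 = 4 * (sin (pi * real k / real p))^2"
    by (simp add: sin_squared_eq algebra_simps)
  then have "4 - 4 * (cos (pi * real k / real p))^2 \<noteq> 0"
    using sin_pi_fraction_neq_zero[OF assms] by simp
  then show ?thesis
    by (metis of_real_eq_0_iff of_real_diff of_real_numeral)
qed

lemma half_period_angle:
  fixes k n :: nat
  assumes "n \<ge> 2" "coprime k (2 * n)"
  defines "\<phi> \<equiv> pi * real k / real n"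
  shows "complex_of_real (4 * (cos (pi * real k / real (2 * n)))^2) - 2 = 2 * of_real (cos \<phi>)"
    and "sin \<phi> \<noteq> 0" and "sin (real n * \<phi>) = 0" and "sin ((real n - 1) * \<phi>) = sin \<phi>"
proof -
  have "\<phi> = 2 * (pi * real k / real (2 * n))"
    by (simp add: \<phi>_def)
  then have "cos \<phi> = 2 * (cos (pi * real k / real (2 * n)))^2 - 1"
    by (simp only: cos_double_cos)
  then have "complex_of_real (4 * (cos (pi * real k / real (2 * n)))^2 - 2) = of_real (2 * cos \<phi>)"
    by simp
  then show "complex_of_real (4 * (cos (pi * real k / real (2 * n)))^2) - 2 = 2 * of_real (cos \<phi>)"
    by simp
  show "sin \<phi> \<noteq> 0"
    unfolding \<phi>_def using assms(1,2) by (intro sin_pi_fraction_neq_zero) auto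
  have n_\<phi>: "real n * \<phi> = real k * pi"
    using assms(1) by (simp add: \<phi>_def)
  then show "sin (real n * \<phi>) = 0"
    by simp
  have "odd k"
  proof
    assume "even k"
    then have "is_unit (2::nat)"
      using assms(2) coprime_common_divisor dvd_triv_left by blast
    then show False
      by simp
  qed
  have "(real n - 1) * \<phi> = real k * pi - \<phi>"
    using n_\<phi> by (simp add: left_diff_distrib)
  then show "sin ((real n - 1) * \<phi>) = sin \<phi>"
    using \<open>odd k\<close> by (simp add: sin_diff)
qed

lemma mpow_twisted_product:
  fixes A T V :: "complex^3^3" and b :: "complex^3" and F G :: "complex^3 \<Rightarrow> complex"
  assumes Tb: "T *v b = b"
    and A: "\<And>x. A *v x = T *v x + F x *s b"
    and F_shift: "\<And>y c. F (y + c *s b) = F y"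
    and F_G: "\<And>x. F x = G x - G (T *v x)"
    and G_pow: "\<And>x. G (mpow T n *v x) = - G x"
    and V: "\<And>x. V *v x = x + (2 * G x) *s b"
  shows "mpow A n = mpow T n ** V"
proof -
  have A_pow: "mpow A k *v x = mpow T k *v x + (\<Sum>j<k. F (mpow T j *v x)) *s b" for k x
  proof (induction k)
    case (Suc k)
    have "mpow A (Suc k) *v x = T *v (mpow T k *v x + (\<Sum>j<k. F (mpow T j *v x)) *s b)
        + F (mpow T k *v x + (\<Sum>j<k. F (mpow T j *v x)) *s b) *s b"
      by (simp only: mpow_Suc_mult_vector Suc.IH A)
    also have "\<dots> = mpow T (Suc k) *v x + (\<Sum>j<Suc k. F (mpow T j *v x)) *s b"
      by (simp add: F_shift vector_scalar_commute Tb
          matrix_vector_mul_assoc algebra_simps)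
    finally show ?case .
  qed simp
  have "(\<Sum>j<n. F (mpow T j *v x)) = G x - G (mpow T n *v x)" for x
    using sum_lessThan_telescope'[of "\<lambda>j. G (mpow T j *v x)" n]
    by (simp add: F_G matrix_vector_mul_assoc)
  then show ?thesis
    by (simp add: matrix_eq A_pow G_pow V mpow_fixes[OF Tb] matrix_vector_mul_assoc[symmetric]
        matrix_vector_right_distrib vector_scalar_commute)
qed

lemma corresponds_transvection:
  assumes b1: "b$1 \<noteq> 0" and wb: "pairing w b = 0"
    and V: "corresponds b V (pairing w a2, pairing w a3)"
  shows "V *v x = x + pairing w x *s b"
proof -
  define c where "c = x$1 / b$1"
  have x: "x = c *s b + (x$2 - c * b$2) *s a2 + (x$3 - c * b$3) *s a3"
    using b1 by (simp add: vec_eq_iff forall_3 c_def a2_def a3_def axis_def)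
  have "V *v x = c *s (V *v b) + (x$2 - c * b$2) *s (V *v a2) + (x$3 - c * b$3) *s (V *v a3)"
    by (subst x) (simp only: matrix_vector_right_distrib vector_scalar_commute)
  also have "\<dots> = c *s b + (x$2 - c * b$2) *s (a2 + pairing w a2 *s b)
      + (x$3 - c * b$3) *s (a3 + pairing w a3 *s b)"
    using V by (simp add: corresponds_def)
  also have "\<dots> = x + pairing w x *s b"
    by (subst (3 4) x) (simp add: pairing_linear wb vec_eq_iff algebra_simps)
  finally show ?thesis .
qed

lemma reflection_product_dual:
  assumes P: "\<And>x. P *v x = x - pairing wP x *s u"
    and Q: "\<And>x. Q *v x = x - pairing wQ x *s v"
    and roots: "pairing wP u = 2" "pairing wQ v = 2"
  shows "pairing wP ((P ** Q) *v x) = pairing wP v * pairing wQ x - pairing wP x"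
    and "pairing wQ ((P ** Q) *v x)
      = (pairing wP v * pairing wQ u - 1) * pairing wQ x - pairing wQ u * pairing wP x"
  by (simp_all add: matrix_vector_mul_assoc[symmetric] pairing_reflection[OF P]
      pairing_reflection[OF Q] roots algebra_simps)

lemma four_minus_neq_zero_of_cos:
  fixes \<kappa> :: complex
  assumes "\<kappa> - 2 = 2 * of_real (cos \<phi>)" "sin \<phi> \<noteq> 0"
  shows "4 - \<kappa> \<noteq> 0"
proof
  assume "4 - \<kappa> = 0"
  with assms(1) have "complex_of_real (cos \<phi>) = 1"
    by simp
  then have "cos \<phi> = 1"
    by (metis of_real_eq_1_iff)
  then show False
    using assms(2) sin_cos_squared_add[of \<phi>] by simp
qed

lemma reflection_pair_twisted_power:
  fixes P Q N1 N2 V :: "complex^3^3" and b u v wP wQ :: "complex^3"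
  assumes P: "\<And>x. P *v x = x - pairing wP x *s u"
    and Q: "\<And>x. Q *v x = x - pairing wQ x *s v"
    and roots: "pairing wP u = 2" "pairing wQ v = 2"
    and fix_b: "pairing wP b = 0" "pairing wQ b = 0"
    and N1: "\<And>x. N1 *v x = x - (s * pairing wP x) *s b"
    and N2: "\<And>x. N2 *v x = x - (t * pairing wQ x) *s b"
    and \<kappa>: "\<kappa> = pairing wP v * pairing wQ u" "\<kappa> - 2 = 2 * of_real (cos \<phi>)"
    and \<sigma>: "\<sigma> = 2 * s - pairing wQ u * t" and \<tau>: "\<tau> = 2 * t - pairing wP v * s"
    and V: "\<And>x. V *v x = x - (2 / (4 - \<kappa>) * (\<sigma> * pairing wP x + \<tau> * pairing wQ x)) *s b"
    and angle: "sin \<phi> \<noteq> 0" "sin (real n * \<phi>) = 0" "sin ((real n - 1) * \<phi>) = sin \<phi>"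
  shows "mpow ((P ** N1) ** (Q ** N2)) n = mpow (P ** Q) n ** V"
proof -
  define T where "T = P ** Q"
  define p q where "p = pairing wP v" and "q = pairing wQ u"
  have "4 - \<kappa> \<noteq> 0"
    using four_minus_neq_zero_of_cos \<kappa>(2) angle(1) .
  have T_b: "T *v b = b"
    by (simp add: T_def P Q fix_b matrix_vector_mul_assoc[symmetric])
  note T_wP = reflection_product_dual(1)[OF P Q roots, folded T_def p_def q_def]
  note T_wQ = reflection_product_dual(2)[OF P Q roots, folded T_def p_def q_def]
  define F where "F x = - (t * pairing wQ x + s * (pairing wP x - p * pairing wQ x))" for x
  \<comment> \<open>\<open>G\<close> solves \<open>F = G - G \<circ> T\<close>; on the span of \<open>wP, wQ\<close> the map \<open>1 - T\<close>
    has determinant \<open>4 - \<kappa>\<close>\<close>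
  define G where "G x = - (\<sigma> * pairing wP x + \<tau> * pairing wQ x) / (4 - \<kappa>)" for x
  have A: "((P ** N1) ** (Q ** N2)) *v x = T *v x + F x *s b" for x
    by (simp add: T_def F_def matrix_vector_mul_assoc[symmetric] P Q N1 N2 fix_b
        pairing_reflection[OF Q] roots pairing_linear p_def algebra_simps)
  have F_shift: "F (y + c *s b) = F y" for y c
    by (simp add: F_def pairing_linear fix_b)
  have G_scaled: "G x * (4 - \<kappa>) = - (\<sigma> * pairing wP x + \<tau> * pairing wQ x)" for x
    using \<open>4 - \<kappa> \<noteq> 0\<close> by (simp add: G_def)
  have F_G: "F x = G x - G (T *v x)" for x
  proof -
    have "(G x - G (T *v x)) * (4 - \<kappa>) = F x * (4 - \<kappa>)"
      unfolding left_diff_distrib G_scaled T_wP T_wQ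
      by (simp add: F_def \<sigma> \<tau> \<kappa>(1) p_def[symmetric] q_def[symmetric] algebra_simps)
    then show ?thesis
      using \<open>4 - \<kappa> \<noteq> 0\<close> by simp
  qed
  have G_rec: "G (T *v (T *v y)) = 2 * of_real (cos \<phi>) * G (T *v y) - G y" for y
    by (simp add: G_def T_wP T_wQ \<kappa>(2)[symmetric] \<kappa>(1) p_def[symmetric] q_def[symmetric]
        divide_simps) (simp add: algebra_simps)
  have G_pow: "G (mpow T n *v x) = - G x" for x
  proof -
    have "G (mpow T (Suc (Suc k)) *v x)
        = 2 * of_real (cos \<phi>) * G (mpow T (Suc k) *v x) - G (mpow T k *v x)" for k
      by (simp only: mpow_Suc_mult_vector G_rec)
    from chebyshev_half_period[where u = "\<lambda>k. G (mpow T k *v x)", OF this angle]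
    show ?thesis by simp
  qed
  have "V *v x = x + (2 * G x) *s b" for x
    using \<open>4 - \<kappa> \<noteq> 0\<close> by (simp add: V G_def vec_eq_iff field_simps)
  from mpow_twisted_product[OF T_b A F_shift F_G G_pow this]
  show ?thesis by (simp only: T_def)
qed

lemma dihedral_twisted_power:
  fixes P Q N1 N2 V :: "complex^3^3" and b u v wP wQ :: "complex^3" and k p n :: nat
  assumes b1: "b$1 \<noteq> 0"
    and P: "\<And>x. P *v x = x - pairing wP x *s u"
    and Q: "\<And>x. Q *v x = x - pairing wQ x *s v"
    and roots: "pairing wP u = 2" "pairing wQ v = 2"
    and fix_b: "pairing wP b = 0" "pairing wQ b = 0"
    and cP: "cP = (- pairing wP a2, - pairing wP a3)"
    and cQ: "cQ = (- pairing wQ a2, - pairing wQ a3)"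
    and N1: "corresponds b N1 (psc s cP)" and N2: "corresponds b N2 (psc t cQ)"
    and \<kappa>: "\<kappa> = pairing wP v * pairing wQ u"
      "\<kappa> = of_real (4 * (cos (pi * real k / real p))^2)"
    and p: "p = 2 * n" "p \<ge> 3" "coprime k p"
    and \<sigma>: "\<sigma> = 2 * s - pairing wQ u * t" and \<tau>: "\<tau> = 2 * t - pairing wP v * s"
    and V: "corresponds b V (psc (2 / (4 - \<kappa>)) (padd (psc \<sigma> cP) (psc \<tau> cQ)))"
  shows "mpow ((P ** N1) ** (Q ** N2)) n = mpow (P ** Q) n ** V"
proof -
  define \<phi> where "\<phi> = pi * real k / real n"
  have n: "n \<ge> 2" "coprime k (2 * n)"
    using p by simp_all
  note angle = half_period_angle[OF n, folded \<phi>_def p(1)]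
  have transvection: "corresponds b N (psc c (- pairing w a2, - pairing w a3))
      \<Longrightarrow> pairing w b = 0 \<Longrightarrow> N *v x = x - (c * pairing w x) *s b" for N c w x
    using corresponds_transvection[OF b1, of "(- c) *s w"]
    by (simp add: psc_def pairing_linear)
  have N1_x: "N1 *v x = x - (s * pairing wP x) *s b"
    and N2_x: "N2 *v x = x - (t * pairing wQ x) *s b" for x
    using N1 N2 cP cQ fix_b by (simp_all add: transvection)
  have V_x: "V *v x = x - (2 / (4 - \<kappa>) * (\<sigma> * pairing wP x + \<tau> * pairing wQ x)) *s b" for x
    using transvection[of V "2 / (4 - \<kappa>)" "\<sigma> *s wP + \<tau> *s wQ"] V cP cQ fix_b
    by (simp add: psc_def padd_def pairing_linear algebra_simps)
  show ?thesis
    by (rule reflection_pair_twisted_power[OF P Q roots fix_b N1_x N2_x \<kappa>(1) _ \<sigma> \<tau> V_x])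
      (use angle \<kappa>(2) in simp_all)
qed

text \<open>The vector \<open>c\<^sub>i\<close> of the paper is \<open>(- pairing coroot\<^sub>i a2, - pairing coroot\<^sub>i a3)\<close>.\<close>

definition coroot1 :: "complex \<Rightarrow> complex \<Rightarrow> complex^3" where
  "coroot1 \<alpha> \<beta> = vector [2, - \<alpha>, - \<beta>]"

definition coroot2 :: "complex \<Rightarrow> complex^3" where
  "coroot2 l = vector [-1, 2, - l]"

definition coroot3 :: "complex \<Rightarrow> complex^3" where
  "coroot3 m = vector [-1, - m, 2]"

lemma refl1_apply: "refl1 \<alpha> \<beta> *v x = x - pairing (coroot1 \<alpha> \<beta>) x *s a1"
  by (simp add: vec_eq_iff matrix_vector_mult_def matrix_def refl1_def coroot1_def
    pairing_3 sum_3 forall_3 a1_def a2_def a3_def axis_def)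

lemma refl2_apply: "refl2 l *v x = x - pairing (coroot2 l) x *s a2"
  by (simp add: vec_eq_iff matrix_vector_mult_def matrix_def refl2_def coroot2_def
    pairing_3 sum_3 forall_3 a1_def a2_def a3_def axis_def)

lemma refl3_apply: "refl3 m *v x = x - pairing (coroot3 m) x *s a3"
  by (simp add: vec_eq_iff matrix_vector_mult_def matrix_def refl3_def coroot3_def
    pairing_3 sum_3 forall_3 a1_def a2_def a3_def axis_def)

lemma coroots_annihilate_bvec:
  assumes "l * m = \<gamma>"
  shows "pairing (coroot1 \<alpha> \<beta>) (bvec \<gamma> l m) = Delta \<alpha> \<beta> \<gamma> l m"
    and "pairing (coroot2 l) (bvec \<gamma> l m) = 0"
    and "pairing (coroot3 m) (bvec \<gamma> l m) = 0"
  using assms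
  by (simp_all add: pairing_3 coroot1_def coroot2_def coroot3_def bvec_def Delta_def
      a1_def a2_def a3_def axis_def algebra_simps)

theorem corollary2:
  fixes p q r k1 k2 k3 :: nat and \<alpha> \<beta> \<gamma> l m lam1 lam2 lam3 :: complex
    and K :: "complex set" and \<nu>1 \<nu>2 \<nu>3 :: "complex^3^3"
  assumes pqr: "p \<ge> 3" "q \<ge> 3" "r \<ge> 3"
    and gcds: "gcd k1 p = 1" "gcd k2 q = 1" "gcd k3 r = 1"
    and alpha: "\<alpha> = of_real (4 * (cos (pi * real k1 / real p))^2)"
    and beta: "\<beta> = of_real (4 * (cos (pi * real k2 / real q))^2)"
    and gamma: "\<gamma> = of_real (4 * (cos (pi * real k3 / real r))^2)"
    and lm: "l * m = \<gamma>"
    and K: "is_subfield_of_complex K" "\<alpha> \<in> K" "\<beta> \<in> K" "\<gamma> \<in> K" "l \<in> K" "m \<in> K"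
    and Delta0: "Delta \<alpha> \<beta> \<gamma> l m = 0"
    and lamK: "lam1 \<in> K" "lam2 \<in> K" "lam3 \<in> K"
    and nu1: "\<nu>1 \<in> gen_group {refl1 \<alpha> \<beta>, refl2 l, refl3 m}"
             "corresponds (bvec \<gamma> l m) \<nu>1 (psc lam1 (\<alpha>, \<beta>))"
    and nu2: "\<nu>2 \<in> gen_group {refl1 \<alpha> \<beta>, refl2 l, refl3 m}"
             "corresponds (bvec \<gamma> l m) \<nu>2 (psc lam2 (-2, l))"
    and nu3: "\<nu>3 \<in> gen_group {refl1 \<alpha> \<beta>, refl2 l, refl3 m}"
             "corresponds (bvec \<gamma> l m) \<nu>3 (psc lam3 (m, -2))"
  shows
    "(\<forall>p1. p = 2 * p1 \<longrightarrow>
        (let \<nu> = psc (2 / (4 - \<alpha>)) (padd (psc (2*lam1 + lam2) (\<alpha>, \<beta>))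
                                           (psc (\<alpha>*lam1 + 2*lam2) (-2, l)))
         in \<nu> = (-2*lam2, 2*(2*\<beta> + \<alpha>*l)/(4-\<alpha>) * lam1 + 2*(\<beta> + 2*l)/(4-\<alpha>) * lam2)
          \<and> (\<forall>V. corresponds (bvec \<gamma> l m) V \<nu> \<longrightarrow>
               mpow ((refl1 \<alpha> \<beta> ** \<nu>1) ** (refl2 l ** \<nu>2)) p1
                 = mpow (refl1 \<alpha> \<beta> ** refl2 l) p1 ** V)))
   \<and> (\<forall>q1. q = 2 * q1 \<longrightarrow>
        (let \<nu>' = psc (2 / (4 - \<beta>)) (padd (psc (2*lam1 + lam3) (\<alpha>, \<beta>))
                                            (psc (\<beta>*lam1 + 2*lam3) (m, -2)))
         in \<nu>' = (2*(2*\<alpha> + \<beta>*m)/(4-\<beta>) * lam1 + 2*(\<alpha> + 2*m)/(4-\<beta>) * lam3, -2*lam3)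
          \<and> (\<forall>V. corresponds (bvec \<gamma> l m) V \<nu>' \<longrightarrow>
               mpow ((refl1 \<alpha> \<beta> ** \<nu>1) ** (refl3 m ** \<nu>3)) q1
                 = mpow (refl1 \<alpha> \<beta> ** refl3 m) q1 ** V)))
   \<and> (\<forall>r1. r = 2 * r1 \<longrightarrow>
        (let \<nu>'' = psc (2 / (4 - \<gamma>)) (padd (psc (2*lam2 + m*lam3) (-2, l))
                                             (psc (l*lam2 + 2*lam3) (m, -2)))
         in \<nu>'' = (-2*lam2, -2*lam3)
          \<and> (\<forall>V. corresponds (bvec \<gamma> l m) V \<nu>'' \<longrightarrow>
               mpow ((refl2 l ** \<nu>2) ** (refl3 m ** \<nu>3)) r1
                 = mpow (refl2 l ** refl3 m) r1 ** V)))"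
proof -
  define b where "b = bvec \<gamma> l m"
  have nz: "4 - \<alpha> \<noteq> 0" "4 - \<beta> \<noteq> 0" "4 - \<gamma> \<noteq> 0"
    using four_minus_four_cos_squared_neq_zero pqr gcds alpha beta gamma
    by (simp_all add: coprime_iff_gcd_eq_1)
  have b1: "b$1 \<noteq> 0"
    using nz(3) by (simp add: b_def bvec_def a1_def a2_def a3_def axis_def)
  have fix_b: "pairing (coroot1 \<alpha> \<beta>) b = 0" "pairing (coroot2 l) b = 0" "pairing (coroot3 m) b = 0"
    using coroots_annihilate_bvec[OF lm] Delta0 by (simp_all add: b_def)
  note nu = nu1(2)[folded b_def] nu2(2)[folded b_def] nu3(2)[folded b_def]
  note [simp] = coroot1_def coroot2_def coroot3_def gcds[folded coprime_iff_gcd_eq_1]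
  show ?thesis
    unfolding Let_def b_def[symmetric]
    apply (intro conjI allI impI)
    subgoal
      using nz(1) by (simp add: psc_def padd_def divide_simps) (simp add: algebra_simps)
    subgoal premises prems
      by (rule dihedral_twisted_power[OF b1 refl1_apply refl2_apply _ _ _ _ _ _ nu(1,2) _ alpha
            prems(1) pqr(1) _ _ _ prems(2)]) (use fix_b lm in simp_all)
    subgoal
      using nz(2) by (simp add: psc_def padd_def divide_simps) (simp add: algebra_simps)
    subgoal premises prems
      by (rule dihedral_twisted_power[OF b1 refl1_apply refl3_apply _ _ _ _ _ _ nu(1,3) _ beta
            prems(1) pqr(2) _ _ _ prems(2)]) (use fix_b lm in simp_all)
    subgoal
      using nz(3) lm by (simp add: psc_def padd_def divide_simps) (simp add: algebra_simps)
    subgoal premises prems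
      by (rule dihedral_twisted_power[OF b1 refl2_apply refl3_apply _ _ _ _ _ _ nu(2,3) _ gamma
            prems(1) pqr(3) _ _ _ prems(2)]) (use fix_b lm in simp_all)
    done
qed

end
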